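(* Let $M\subseteq Seq(\mathbb{R})$ be a union of some of the blocks $A,B,C,D,E,F,G$. Then $M$ is a linear subspace of $Seq(\mathbb{R})$ (under pointwise addition and scalar multiplication) if and only if $M\in\{G,\ B\cup G,\ Seq(\mathbb{R})\}$. (Here $G$ is the space of convergent sequences and $B\cup G=\ell^\infty$ is the space of bounded sequences.)
   Context: $Seq(\mathbb{R})$ denotes the set of all real sequences $a=(a_n)_{n\ge1}$. For such $a$, $L_1(a):=\liminf_{n\to\infty}a_n$ and $L_2(a):=\limsup_{n\to\infty}a_n$, with values in $[-\infty,+\infty]$. The blocks are: $A=\{a: L_1(a)=-\infty,\ -\infty<L_2(a)<+\infty\}$; $B=\{a: -\infty<L_1(a)<L_2(a)<+\infty\}$; $C=\{a: -\infty<L_1(a)<L_2(a)=+\infty\}$; $D=\{a: L_1(a)=-\infty,\ L_2(a)=+\infty\}$; $E=\{a: L_1(a)=L_2(a)=-\infty\}$; $F=\{a: L_1(a)=L_2(a)=+\infty\}$; $G=\{a: -\infty<L_1(a)=L_2(a)<+\infty\}$ (i.e. the convergent sequences). These seven sets partition $Seq(\mathbb{R})$. *)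

theory Defs
  imports "HOL-Analysis.Analysis" "HOL-Library.Function_Algebras"
begin

text \<open>Real sequences are functions nat => real (indexing from 0 instead of 1 does
not affect liminf/limsup). Pointwise addition/zero come from Function_Algebras;
scalar multiplication is pointwise.\<close>

type_synonym rseq = "nat \<Rightarrow> real"

definition seq_scale :: "real \<Rightarrow> rseq \<Rightarrow> rseq" where
  "seq_scale c a = (\<lambda>n. c * a n)"

definition L1 :: "rseq \<Rightarrow> ereal" where
  "L1 a = liminf (\<lambda>n. ereal (a n))"

definition L2 :: "rseq \<Rightarrow> ereal" where
  "L2 a = limsup (\<lambda>n. ereal (a n))"

datatype block = A | B | C | D | E | F | G

fun blk :: "block \<Rightarrow> rseq set" where
  "blk A = {a. L1 a = -\<infinity> \<and> -\<infinity> < L2 a \<and> L2 a < \<infinity>}"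
| "blk B = {a. -\<infinity> < L1 a \<and> L1 a < L2 a \<and> L2 a < \<infinity>}"
| "blk C = {a. -\<infinity> < L1 a \<and> L1 a < L2 a \<and> L2 a = \<infinity>}"
| "blk D = {a. L1 a = -\<infinity> \<and> L2 a = \<infinity>}"
| "blk E = {a. L1 a = -\<infinity> \<and> L2 a = -\<infinity>}"
| "blk F = {a. L1 a = \<infinity> \<and> L2 a = \<infinity>}"
| "blk G = {a. -\<infinity> < L1 a \<and> L1 a = L2 a \<and> L2 a < \<infinity>}"

end

theory Submission
  imports Defs
begin

text \<open>
  A union of blocks that contains one sequence of a block contains the whole block, so a
  subspace of this form contains 0 and hence all of G. If it contains an unbounded sequence,
  it also contains its negative, which lies in the mirror block (negation swaps A with C and
  E with F); as A + C and E + F both meet D, the subspace contains D, and since every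
  sequence is a difference of two sequences in D, it is everything. Otherwise it consists of
  bounded sequences and is G or B \<union> G according to whether it meets B.
\<close>

interpretation seq: module seq_scale
  by unfold_locales (auto simp: seq_scale_def fun_eq_iff algebra_simps)

lemma L1_le_L2: "L1 a \<le> L2 a"
  unfolding L1_def L2_def by (rule Liminf_le_Limsup) simp

lemma L1_uminus: "L1 (- a) = - L2 a"
proof -
  have "(\<lambda>n. ereal ((- a) n)) = (\<lambda>n. - ereal (a n))"
    by simp
  then show ?thesis
    unfolding L1_def L2_def by (simp only: ereal_Liminf_uminus)
qed

lemma L2_uminus: "L2 (- a) = - L1 a"
  using L1_uminus[of "- a"] by (simp add: ereal_uminus_eq_reorder)

lemma le_L2_if_subseq:
  assumes "strict_mono r" and "eventually (\<lambda>n. c \<le> a (r n)) sequentially"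
  shows "ereal c \<le> L2 a"
proof -
  have "ereal c \<le> limsup (\<lambda>n. ereal (a (r n)))"
    by (rule le_Limsup) (use assms(2) in auto)
  also have "\<dots> \<le> L2 a"
    using limsup_subseq_mono[OF assms(1), of "\<lambda>n. ereal (a n)"]
    by (simp add: L2_def comp_def)
  finally show ?thesis .
qed

lemma L1_le_if_subseq:
  assumes "strict_mono r" and "eventually (\<lambda>n. a (r n) \<le> c) sequentially"
  shows "L1 a \<le> ereal c"
proof -
  have "ereal (- c) \<le> L2 (- a)"
    by (rule le_L2_if_subseq[OF assms(1)]) (use assms(2) in auto)
  then show ?thesis
    by (metis L2_uminus ereal_minus_le_minus uminus_ereal.simps(1))
qed

lemma L2_eq_PInfty_if_subseq:
  assumes "strict_mono r" and "filterlim (\<lambda>n. a (r n)) at_top sequentially"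
  shows "L2 a = \<infinity>"
  using le_L2_if_subseq[OF assms(1)] assms(2) by (intro ereal_top) (simp add: filterlim_at_top)

lemma L1_eq_MInfty_if_subseq:
  assumes "strict_mono r" and "filterlim (\<lambda>n. a (r n)) at_bot sequentially"
  shows "L1 a = -\<infinity>"
proof -
  have "L2 (- a) = \<infinity>"
    using L2_eq_PInfty_if_subseq[OF assms(1)] assms(2)
    by (simp add: filterlim_uminus_at_bot)
  then show ?thesis
    by (simp add: L2_uminus ereal_uminus_eq_reorder)
qed

lemma L1_mono: "(\<And>n. a n \<le> b n) \<Longrightarrow> L1 a \<le> L1 b"
  unfolding L1_def by (intro Liminf_mono always_eventually) simp

lemma L2_mono: "(\<And>n. a n \<le> b n) \<Longrightarrow> L2 a \<le> L2 b"
  unfolding L2_def by (intro Limsup_mono always_eventually) simp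

lemma blk_unique: "a \<in> blk X \<Longrightarrow> a \<in> blk Y \<Longrightarrow> X = Y"
  by (cases X; cases Y) auto

lemma ex_blk: "\<exists>X. a \<in> blk X"
proof -
  have "a \<in> blk A \<or> a \<in> blk B \<or> a \<in> blk C \<or> a \<in> blk D \<or>
        a \<in> blk E \<or> a \<in> blk F \<or> a \<in> blk G"
    using L1_le_L2[of a] by (cases "L1 a"; cases "L2 a") auto
  then show ?thesis
    by blast
qed

lemma blk_subset_if_mem:
  assumes "M = \<Union> (blk ` S)" and "a \<in> M" and "a \<in> blk X"
  shows "blk X \<subseteq> M"
  using assms blk_unique by blast

lemma blk_B_Un_G_iff: "a \<in> blk B \<union> blk G \<longleftrightarrow> -\<infinity> < L1 a \<and> L2 a < \<infinity>"
  using L1_le_L2[of a] by (cases "L1 a"; cases "L2 a") auto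

fun mirror_block :: "block \<Rightarrow> block" where
  "mirror_block A = C"
| "mirror_block C = A"
| "mirror_block E = F"
| "mirror_block F = E"
| "mirror_block X = X"

lemma uminus_in_blk_mirror: "a \<in> blk X \<Longrightarrow> - a \<in> blk (mirror_block X)"
  by (cases X) (auto simp: L1_uminus L2_uminus ereal_uminus_eq_reorder
      ereal_uminus_less_reorder ereal_less_uminus_reorder)

lemma blk_G_eq_convergent: "blk G = {a. convergent a}"
proof safe
  fix a :: rseq assume "a \<in> blk G"
  then obtain l where l: "L1 a = ereal l" "L2 a = ereal l"
    by (cases "L1 a") auto
  have "(\<lambda>n. ereal (a n)) \<longlonglongrightarrow> ereal l"
    by (rule Liminf_eq_Limsup) (use l in \<open>auto simp: L1_def L2_def\<close>)
  then show "convergent a"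
    by (auto simp: convergent_def)
next
  fix a :: rseq assume "convergent a"
  then obtain l where "(\<lambda>n. ereal (a n)) \<longlonglongrightarrow> ereal l"
    by (auto simp: convergent_def)
  then have "L1 a = ereal l" "L2 a = ereal l"
    unfolding L1_def L2_def by (auto intro: lim_imp_Liminf lim_imp_Limsup)
  then show "a \<in> blk G"
    by simp
qed

lemma blk_B_Un_G_eq_Bseq: "blk B \<union> blk G = {a. Bseq a}"
proof -
  have "Bseq a" if "a \<in> blk B \<union> blk G" for a
  proof -
    have "-\<infinity> < L1 a" "L2 a < \<infinity>"
      using that by (simp_all only: blk_B_Un_G_iff)
    then obtain r s :: real where r: "L2 a < ereal r" and s: "ereal s < L1 a"
      by (metis ereal_dense2)
    have "eventually (\<lambda>n. ereal (a n) < ereal r) sequentially"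
      using r unfolding L2_def by (rule Limsup_lessD)
    moreover have "eventually (\<lambda>n. ereal s < ereal (a n)) sequentially"
      using s unfolding L1_def by (rule less_LiminfD)
    ultimately have "eventually (\<lambda>n. norm (a n) \<le> max \<bar>r\<bar> \<bar>s\<bar>) sequentially"
      by eventually_elim auto
    then show "Bseq a"
      by (rule BfunI)
  qed
  moreover have "a \<in> blk B \<union> blk G" if "Bseq a" for a
  proof -
    obtain K where bound: "\<And>n. \<bar>a n\<bar> \<le> K"
      using \<open>Bseq a\<close> by (auto simp: Bseq_def)
    have K: "- K \<le> a n" "a n \<le> K" for n
      using bound[of n] by linarith+
    have "L2 a \<le> ereal K"
      unfolding L2_def by (intro Limsup_bounded always_eventually allI) (simp add: K)
    moreover have "ereal (- K) \<le> L1 a"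
      unfolding L1_def by (intro Liminf_bounded always_eventually allI) (simp add: K)
    ultimately show ?thesis
      unfolding blk_B_Un_G_iff by auto
  qed
  ultimately show ?thesis
    by blast
qed

lemma subspace_convergent: "seq.subspace {a. convergent a}"
proof (rule seq.subspaceI)
  show "0 \<in> {a. convergent a}"
    by (simp add: zero_fun_def convergent_const)
  show "x + y \<in> {a. convergent a}"
    if "x \<in> {a. convergent a}" and "y \<in> {a. convergent a}" for x y :: rseq
    using that convergent_add[of x y] by (simp add: plus_fun_def)
  show "seq_scale c x \<in> {a. convergent a}" if "x \<in> {a. convergent a}" for c and x :: rseq
    using that convergent_mult[OF convergent_const[of c], of x] by (simp add: seq_scale_def)
qed

lemma subspace_Bseq: "seq.subspace {a. Bseq a}"
proof (rule seq.subspaceI)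
  show "0 \<in> {a. Bseq a}"
    by (simp add: zero_fun_def)
  show "x + y \<in> {a. Bseq a}"
    if hx: "x \<in> {a. Bseq a}" and hy: "y \<in> {a. Bseq a}" for x y :: rseq
  proof -
    obtain K L where K: "\<And>n. \<bar>x n\<bar> \<le> K" and L: "\<And>n. \<bar>y n\<bar> \<le> L"
      using hx hy by (auto simp: Bseq_def)
    have "norm ((x + y) n) \<le> K + L" for n
      using abs_triangle_ineq[of "x n" "y n"] K[of n] L[of n] by simp
    then show ?thesis
      using BseqI' by blast
  qed
  show "seq_scale c x \<in> {a. Bseq a}" if "x \<in> {a. Bseq a}" for c and x :: rseq
    using that Bseq_mult[OF Bfun_const[of c], of x] by (simp add: seq_scale_def)
qed

lemma zero_in_blk_G: "0 \<in> blk G"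
  using convergent_const[of 0] by (simp only: blk_G_eq_convergent zero_fun_def mem_Collect_eq)

lemma oscillating_in_blk_D:
  assumes "\<And>n. even n \<Longrightarrow> real n \<le> a n" and "\<And>n. odd n \<Longrightarrow> a n \<le> - real n"
  shows "a \<in> blk D"
proof -
  have "L2 a = \<infinity>"
  proof (rule L2_eq_PInfty_if_subseq)
    show "strict_mono (\<lambda>n::nat. 2 * n)"
      by (rule strict_monoI) simp
    have "real n \<le> a (2 * n)" for n
      using assms(1)[of "2 * n"] by simp
    then show "filterlim (\<lambda>n. a (2 * n)) at_top sequentially"
      by (intro filterlim_at_top_mono[OF filterlim_real_sequentially] always_eventually allI)
  qed
  moreover have "L1 a = -\<infinity>"
  proof (rule L1_eq_MInfty_if_subseq)
    show "strict_mono (\<lambda>n::nat. 2 * n + 1)"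
      by (rule strict_monoI) simp
    have "real n \<le> - a (2 * n + 1)" for n
      using assms(2)[of "2 * n + 1"] by simp
    then show "filterlim (\<lambda>n. a (2 * n + 1)) at_bot sequentially"
      unfolding filterlim_uminus_at_bot
      by (intro filterlim_at_top_mono[OF filterlim_real_sequentially] always_eventually allI)
  qed
  ultimately show ?thesis
    by simp
qed

lemma tendsto_at_top_in_blk_F:
  assumes "filterlim a at_top sequentially"
  shows "a \<in> blk F"
proof -
  have "L1 a = \<infinity>"
    using assms unfolding L1_def by (simp add: Liminf_PInfty[symmetric] tendsto_PInfty_eq_at_top)
  then show ?thesis
    using L1_le_L2[of a] by simp
qed

definition alternating :: rseq where
  "alternating n = (-1) ^ n * real n"

lemma alternating_in_blk_D: "alternating \<in> blk D"
  by (rule oscillating_in_blk_D) (simp_all add: alternating_def)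

lemma ex_blk_A_blk_C_sum_in_blk_D: "\<exists>u\<in>blk A. \<exists>v\<in>blk C. u + v \<in> blk D"
proof -
  define u :: rseq where "u n = min 0 (alternating n)" for n
  define v :: rseq where "v n = max 0 (alternating n)" for n
  have "u \<in> blk A"
  proof -
    have "L1 u \<le> L1 alternating"
      by (rule L1_mono) (simp add: u_def)
    moreover have "L2 u = 0"
    proof (rule antisym)
      show "L2 u \<le> 0"
        unfolding L2_def
        by (intro Limsup_bounded always_eventually) (simp add: u_def zero_ereal_def)
      show "0 \<le> L2 u"
        using le_L2_if_subseq[of "\<lambda>n. 2 * n" 0 u]
        by (simp add: strict_mono_def u_def alternating_def zero_ereal_def)
    qed
    ultimately show ?thesis
      using alternating_in_blk_D by simp
  qed
  moreover have "v \<in> blk C"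
  proof -
    have "L2 alternating \<le> L2 v"
      by (rule L2_mono) (simp add: v_def)
    moreover have "L1 v = 0"
    proof (rule antisym)
      show "L1 v \<le> 0"
        using L1_le_if_subseq[of "\<lambda>n. 2 * n + 1" v 0]
        by (simp add: strict_mono_def v_def alternating_def zero_ereal_def)
      show "0 \<le> L1 v"
        unfolding L1_def
        by (intro Liminf_bounded always_eventually) (simp add: v_def zero_ereal_def)
    qed
    ultimately show ?thesis
      using alternating_in_blk_D by simp
  qed
  moreover have "u + v = alternating"
    by (simp add: fun_eq_iff u_def v_def min_def max_def)
  ultimately show ?thesis
    using alternating_in_blk_D by metis
qed

lemma ex_blk_E_blk_F_sum_in_blk_D: "\<exists>u\<in>blk E. \<exists>v\<in>blk F. u + v \<in> blk D"
proof -
  define v :: rseq where "v n = 2 * real n" for n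
  have "v \<in> blk F"
    by (intro tendsto_at_top_in_blk_F filterlim_at_top_mono[OF filterlim_real_sequentially]
        always_eventually allI) (simp add: v_def)
  moreover have "alternating - v \<in> blk E"
  proof -
    have "real n \<le> (v - alternating) n" for n
      by (cases "even n") (simp_all add: v_def alternating_def)
    then have "v - alternating \<in> blk F"
      by (intro tendsto_at_top_in_blk_F filterlim_at_top_mono[OF filterlim_real_sequentially]
          always_eventually allI)
    then show ?thesis
      using uminus_in_blk_mirror[of "v - alternating" F] by simp
  qed
  ultimately show ?thesis
    using alternating_in_blk_D by (metis diff_add_cancel)
qed

lemma subspace_eq_UNIV_if_blk_D:
  assumes "seq.subspace M" and "blk D \<subseteq> M"
  shows "M = UNIV"
proof -
  have "t \<in> M" for t
  proof -
    define p :: rseq where "p n = (-1) ^ n * (\<bar>t n\<bar> + real n)" for n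
    have "t + p \<in> blk D"
      by (rule oscillating_in_blk_D) (simp_all add: p_def abs_if)
    moreover have "p \<in> blk D"
      by (rule oscillating_in_blk_D) (simp_all add: p_def)
    ultimately have "(t + p) - p \<in> M"
      using assms by (blast intro: seq.subspace_diff)
    then show ?thesis
      by simp
  qed
  then show ?thesis
    by blast
qed

lemma blk_D_subset_if_unbounded:
  assumes sub: "seq.subspace M" and M: "M = \<Union> (blk ` S)"
    and "a \<in> M" and "a \<notin> blk B \<union> blk G"
  shows "blk D \<subseteq> M"
proof -
  obtain X where X: "a \<in> blk X"
    using ex_blk by blast
  have "blk X \<subseteq> M"
    using M \<open>a \<in> M\<close> X by (rule blk_subset_if_mem)
  moreover have "blk (mirror_block X) \<subseteq> M"
    using M seq.subspace_neg[OF sub \<open>a \<in> M\<close>] uminus_in_blk_mirror[OF X]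
    by (rule blk_subset_if_mem)
  ultimately have "blk D \<subseteq> M \<or> blk A \<union> blk C \<subseteq> M \<or> blk E \<union> blk F \<subseteq> M"
    using X assms(4) by (cases X) auto
  moreover have "blk D \<subseteq> M" if "u \<in> M" "v \<in> M" "u + v \<in> blk D" for u v
    using M seq.subspace_add[OF sub that(1,2)] that(3) by (rule blk_subset_if_mem)
  ultimately show ?thesis
    using ex_blk_A_blk_C_sum_in_blk_D ex_blk_E_blk_F_sum_in_blk_D by blast
qed

theorem theorem3p5:
  fixes M :: "rseq set" and S :: "block set"
  assumes "M = \<Union> (blk ` S)"
  shows "module.subspace seq_scale M \<longleftrightarrow>
           (M = blk G \<or> M = blk B \<union> blk G \<or> M = UNIV)"
proof
  assume sub: "module.subspace seq_scale M"
  have "blk G \<subseteq> M"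
    using assms seq.subspace_0[OF sub] zero_in_blk_G by (rule blk_subset_if_mem)
  show "M = blk G \<or> M = blk B \<union> blk G \<or> M = UNIV"
  proof (cases "M \<subseteq> blk B \<union> blk G")
    case True
    then show ?thesis
      using \<open>blk G \<subseteq> M\<close> blk_subset_if_mem[OF assms, of _ B] by blast
  next
    case False
    then obtain a where "a \<in> M" "a \<notin> blk B \<union> blk G"
      by blast
    then have "blk D \<subseteq> M"
      using blk_D_subset_if_unbounded[OF sub assms] by blast
    then show ?thesis
      using subspace_eq_UNIV_if_blk_D[OF sub] by blast
  qed
next
  assume "M = blk G \<or> M = blk B \<union> blk G \<or> M = UNIV"
  then show "module.subspace seq_scale M"
    using subspace_convergent subspace_Bseq seq.subspace_UNIV
    by (metis blk_G_eq_convergent blk_B_Un_G_eq_Bseq)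
qed

end
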